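(* Let $A = \langle \Sigma, Q, q_0, \tau, \phi\rangle$ be an NFA in which every state is reachable from the initial state, and let $\Psi$ be a merge operation producing the NFA $\Psi(A)$. If $A$ contains a single closed communicating class, then $\Psi(A)$ also contains a single closed communicating class.
   Context: An NFA $A = \langle \Sigma, Q, q_0, \tau, \phi\rangle$ has finite alphabet $\Sigma$, finite state set $Q$, initial state $q_0$, transition function $\tau : Q\times\Sigma \to 2^Q$, termination function $\phi: Q \to \{0,1\}$; $\tau$ extends to strings by $\tau(q,\lambda)=\{q\}$, $\tau(q,x\sigma) = \bigcup_{q'\in\tau(q,x)}\tau(q',\sigma)$, and $\tau_\star(S) = \bigcup_{q\in S, x\in\Sigma^\star}\tau(q,x)$. A state $q$ is reachable if $q \in \tau_\star(\{q_0\})$. States $q,q'$ communicate if $q' \in \tau_\star(\{q\})$ and $q\in\tau_\star(\{q'\})$; the equivalence classes are communicating classes; a class $Q'$ is closed if $\tau_\star(Q') = Q'$. $\tilde{A} = \langle \Sigma, \tilde{Q}, \tilde{q}_0, \tilde{\tau}, \tilde{\phi}\rangle$ is obtained from $A$ by a merge operation $\Psi : Q \to \tilde{Q}$ if $\Psi$ is surjective, $\Psi(q_0) = \tilde{q}_0$, $\phi(q) = \tilde{\phi}(\Psi(q))$ for all $q \in Q$, and for all $q\in Q$, $\sigma \in \Sigma$, $q' \in \tau(q,\sigma)$ implies $\Psi(q') \in \tilde{\tau}(\Psi(q),\sigma)$; we write $\Psi(A)$ for $\tilde{A}$. *)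

theory Defs
  imports Main
begin

text \<open>An NFA <Sigma, Q, q0, tau, phi>. Transitions leaving Q or using letters outside
  Sigma are irrelevant; well-formedness requires tau to map into Q.\<close>

record ('q, 'a) nfa =
  alphabet :: "'a set"
  states   :: "'q set"
  init     :: 'q
  trans    :: "'q \<Rightarrow> 'a \<Rightarrow> 'q set"
  final    :: "'q \<Rightarrow> bool"

definition is_nfa :: "('q, 'a) nfa \<Rightarrow> bool" where
  "is_nfa A \<longleftrightarrow> finite (alphabet A) \<and> finite (states A) \<and> init A \<in> states A \<and>
     (\<forall>q\<in>states A. \<forall>\<sigma>\<in>alphabet A. trans A q \<sigma> \<subseteq> states A)"

definition tau_word :: "('q, 'a) nfa \<Rightarrow> 'q \<Rightarrow> 'a list \<Rightarrow> 'q set" where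
  "tau_word A q w = foldl (\<lambda>S \<sigma>. \<Union>q'\<in>S. trans A q' \<sigma>) {q} w"

definition tau_star :: "('q, 'a) nfa \<Rightarrow> 'q set \<Rightarrow> 'q set" where
  "tau_star A S = (\<Union>q\<in>S. \<Union>x\<in>lists (alphabet A). tau_word A q x)"

definition reachable :: "('q, 'a) nfa \<Rightarrow> 'q \<Rightarrow> bool" where
  "reachable A q \<longleftrightarrow> q \<in> tau_star A {init A}"

definition communicate :: "('q, 'a) nfa \<Rightarrow> 'q \<Rightarrow> 'q \<Rightarrow> bool" where
  "communicate A q q' \<longleftrightarrow> q' \<in> tau_star A {q} \<and> q \<in> tau_star A {q'}"

definition comm_classes :: "('q, 'a) nfa \<Rightarrow> 'q set set" where
  "comm_classes A = (\<lambda>q. {q' \<in> states A. communicate A q q'}) ` states A"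

definition closed_class :: "('q, 'a) nfa \<Rightarrow> 'q set \<Rightarrow> bool" where
  "closed_class A C \<longleftrightarrow> tau_star A C = C"

definition single_closed_class :: "('q, 'a) nfa \<Rightarrow> bool" where
  "single_closed_class A \<longleftrightarrow> (\<exists>!C. C \<in> comm_classes A \<and> closed_class A C)"

definition merge_op :: "('q, 'a) nfa \<Rightarrow> ('q \<Rightarrow> 'p) \<Rightarrow> ('p, 'a) nfa \<Rightarrow> bool" where
  "merge_op A \<Psi> B \<longleftrightarrow>
     alphabet B = alphabet A \<and>
     \<Psi> ` states A = states B \<and>
     \<Psi> (init A) = init B \<and>
     (\<forall>q\<in>states A. final A q = final B (\<Psi> q)) \<and>
     (\<forall>q\<in>states A. \<forall>\<sigma>\<in>alphabet A. \<forall>q'\<in>trans A q \<sigma>. \<Psi> q' \<in> trans B (\<Psi> q) \<sigma>)"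

end

theory Submission
  imports Defs
begin

text \<open>Reachability in an NFA is the reflexive transitive closure of the one-letter step relation,
  so a communicating class is closed exactly when it is a bottom strongly connected component.
  By finiteness every state reaches a closed class; hence an NFA has a single closed class iff
  some state is reachable from every state. A merge operation maps paths of \<open>A\<close> to paths of
  \<open>\<Psi>(A)\<close> and is onto the states, so the image of such a state is again reachable from every
  state of \<open>\<Psi>(A)\<close>.\<close>

definition nfa_step :: "('q, 'a) nfa \<Rightarrow> 'q \<Rightarrow> 'q \<Rightarrow> bool" where
  "nfa_step A q q' \<longleftrightarrow> (\<exists>\<sigma>\<in>alphabet A. q' \<in> trans A q \<sigma>)"

definition comm_class :: "('q, 'a) nfa \<Rightarrow> 'q \<Rightarrow> 'q set" where
  "comm_class A q = {q' \<in> states A. communicate A q q'}"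

lemma tau_word_snoc: "tau_word A q (w @ [\<sigma>]) = (\<Union>q'\<in>tau_word A q w. trans A q' \<sigma>)"
  by (simp add: tau_word_def)

lemma tau_word_imp_steps:
  "w \<in> lists (alphabet A) \<Longrightarrow> x \<in> tau_word A q w \<Longrightarrow> (nfa_step A)\<^sup>*\<^sup>* q x"
proof (induction w arbitrary: x rule: rev_induct)
  case Nil
  then show ?case by (simp add: tau_word_def)
next
  case (snoc \<sigma> w)
  then obtain y where "y \<in> tau_word A q w" "x \<in> trans A y \<sigma>"
    by (auto simp: tau_word_snoc)
  with snoc show ?case
    by (auto simp: nfa_step_def intro: rtranclp.rtrancl_into_rtrancl)
qed

lemma steps_imp_tau_word:
  "(nfa_step A)\<^sup>*\<^sup>* q x \<Longrightarrow> \<exists>w\<in>lists (alphabet A). x \<in> tau_word A q w"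
proof (induction rule: rtranclp_induct)
  case base
  have "q \<in> tau_word A q []" by (simp add: tau_word_def)
  then show ?case by blast
next
  case (step y z)
  then obtain w \<sigma> where "w \<in> lists (alphabet A)" "y \<in> tau_word A q w"
    and "\<sigma> \<in> alphabet A" "z \<in> trans A y \<sigma>"
    by (auto simp: nfa_step_def)
  then have "w @ [\<sigma>] \<in> lists (alphabet A)" "z \<in> tau_word A q (w @ [\<sigma>])"
    by (auto simp: tau_word_snoc)
  then show ?case by blast
qed

lemma tau_star_eq: "tau_star A S = {x. \<exists>q\<in>S. (nfa_step A)\<^sup>*\<^sup>* q x}"
proof -
  have "(\<exists>w\<in>lists (alphabet A). x \<in> tau_word A q w) \<longleftrightarrow> (nfa_step A)\<^sup>*\<^sup>* q x" for q x
    using tau_word_imp_steps steps_imp_tau_word by metis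
  then show ?thesis
    by (simp add: tau_star_def set_eq_iff)
qed

lemma communicate_iff:
  "communicate A q q' \<longleftrightarrow> (nfa_step A)\<^sup>*\<^sup>* q q' \<and> (nfa_step A)\<^sup>*\<^sup>* q' q"
  by (simp add: communicate_def tau_star_eq)

lemma comm_classes_eq: "comm_classes A = comm_class A ` states A"
  by (simp add: comm_classes_def comm_class_def)

lemma self_in_comm_class: "q \<in> states A \<Longrightarrow> q \<in> comm_class A q"
  by (simp add: comm_class_def communicate_iff)

lemma comm_class_eqI:
  assumes "(nfa_step A)\<^sup>*\<^sup>* p q" "(nfa_step A)\<^sup>*\<^sup>* q p"
  shows "comm_class A p = comm_class A q"
  using assms unfolding comm_class_def communicate_iff
  by (blast intro: rtranclp_trans)

lemma steps_in_states:
  assumes "is_nfa A" "(nfa_step A)\<^sup>*\<^sup>* q x" "q \<in> states A"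
  shows "x \<in> states A"
  using assms(2,3)
  by (induction rule: rtranclp_induct) (use assms(1) in \<open>auto simp: is_nfa_def nfa_step_def\<close>)

lemma finite_reachable_states:
  assumes "is_nfa A" "q \<in> states A"
  shows "finite {x. (nfa_step A)\<^sup>*\<^sup>* q x}"
proof (rule finite_subset)
  show "{x. (nfa_step A)\<^sup>*\<^sup>* q x} \<subseteq> states A"
    using steps_in_states[OF assms(1) _ assms(2)] by blast
  show "finite (states A)" using assms(1) by (simp add: is_nfa_def)
qed

text \<open>Stepping to a state that cannot return strictly shrinks the finite set of reachable states.\<close>
lemma reaches_bottom_state:
  assumes "is_nfa A" "q \<in> states A"
  shows "\<exists>r. (nfa_step A)\<^sup>*\<^sup>* q r \<and> (\<forall>s. (nfa_step A)\<^sup>*\<^sup>* r s \<longrightarrow> (nfa_step A)\<^sup>*\<^sup>* s r)"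
  using assms(2)
proof (induction "card {x. (nfa_step A)\<^sup>*\<^sup>* q x}" arbitrary: q rule: less_induct)
  case less
  show ?case
  proof (cases "\<forall>s. (nfa_step A)\<^sup>*\<^sup>* q s \<longrightarrow> (nfa_step A)\<^sup>*\<^sup>* s q")
    case True
    then show ?thesis by blast
  next
    case False
    then obtain s where s: "(nfa_step A)\<^sup>*\<^sup>* q s" "\<not> (nfa_step A)\<^sup>*\<^sup>* s q" by blast
    have "{x. (nfa_step A)\<^sup>*\<^sup>* s x} \<subset> {x. (nfa_step A)\<^sup>*\<^sup>* q x}"
      using s by (auto intro: rtranclp_trans)
    then have "card {x. (nfa_step A)\<^sup>*\<^sup>* s x} < card {x. (nfa_step A)\<^sup>*\<^sup>* q x}"
      by (rule psubset_card_mono[OF finite_reachable_states[OF assms(1) less.prems]])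
    moreover have "s \<in> states A" using steps_in_states[OF assms(1) s(1) less.prems] .
    ultimately obtain r where "(nfa_step A)\<^sup>*\<^sup>* s r"
        "\<forall>t. (nfa_step A)\<^sup>*\<^sup>* r t \<longrightarrow> (nfa_step A)\<^sup>*\<^sup>* t r"
      using less.hyps by blast
    then show ?thesis using s(1) by (meson rtranclp_trans)
  qed
qed

lemma closed_comm_class_of_bottom_state:
  assumes "is_nfa A" "r \<in> states A" "\<forall>s. (nfa_step A)\<^sup>*\<^sup>* r s \<longrightarrow> (nfa_step A)\<^sup>*\<^sup>* s r"
  shows "closed_class A (comm_class A r)"
proof -
  have "comm_class A r = {x. (nfa_step A)\<^sup>*\<^sup>* r x}"
    using assms steps_in_states[OF assms(1) _ assms(2)]
    unfolding comm_class_def communicate_iff by blast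
  then show ?thesis
    unfolding closed_class_def tau_star_eq by (auto intro: rtranclp_trans)
qed

lemma single_closed_class_iff_common_target:
  assumes "is_nfa A"
  shows "single_closed_class A \<longleftrightarrow>
    (\<exists>c\<in>states A. \<forall>q\<in>states A. (nfa_step A)\<^sup>*\<^sup>* q c)"
proof
  assume "single_closed_class A"
  then obtain C where "C \<in> comm_classes A" "closed_class A C"
    and unique: "\<And>D. D \<in> comm_classes A \<Longrightarrow> closed_class A D \<Longrightarrow> D = C"
    unfolding single_closed_class_def by blast
  then obtain c where c: "c \<in> states A" "C = comm_class A c"
    unfolding comm_classes_eq by blast
  have "(nfa_step A)\<^sup>*\<^sup>* q c" if q: "q \<in> states A" for q
  proof -
    obtain r where r: "(nfa_step A)\<^sup>*\<^sup>* q r"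
        "\<forall>s. (nfa_step A)\<^sup>*\<^sup>* r s \<longrightarrow> (nfa_step A)\<^sup>*\<^sup>* s r"
      using reaches_bottom_state[OF assms q] by blast
    have r_state: "r \<in> states A" using steps_in_states[OF assms r(1) q] .
    have "comm_class A r \<in> comm_classes A"
      using r_state by (simp add: comm_classes_eq)
    then have "comm_class A r = comm_class A c"
      using unique closed_comm_class_of_bottom_state[OF assms r_state r(2)] c(2) by simp
    then have "c \<in> comm_class A r" using self_in_comm_class[OF c(1)] by simp
    then have "(nfa_step A)\<^sup>*\<^sup>* r c" by (simp add: comm_class_def communicate_iff)
    with r(1) show ?thesis by (rule rtranclp_trans)
  qed
  with c(1) show "\<exists>c\<in>states A. \<forall>q\<in>states A. (nfa_step A)\<^sup>*\<^sup>* q c" by blast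
next
  assume "\<exists>c\<in>states A. \<forall>q\<in>states A. (nfa_step A)\<^sup>*\<^sup>* q c"
  then obtain c where c: "c \<in> states A"
    and to_c: "\<And>q. q \<in> states A \<Longrightarrow> (nfa_step A)\<^sup>*\<^sup>* q c"
    by blast
  have "\<forall>s. (nfa_step A)\<^sup>*\<^sup>* c s \<longrightarrow> (nfa_step A)\<^sup>*\<^sup>* s c"
    using to_c steps_in_states[OF assms _ c] by blast
  then have closed: "closed_class A (comm_class A c)"
    by (rule closed_comm_class_of_bottom_state[OF assms c])
  have "D = comm_class A c" if D: "D \<in> comm_classes A" "closed_class A D" for D
  proof -
    obtain p where p: "p \<in> states A" "D = comm_class A p"
      using D(1) unfolding comm_classes_eq by blast
    have "c \<in> tau_star A D"
      using self_in_comm_class[OF p(1)] to_c[OF p(1)] p(2) by (auto simp: tau_star_eq)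
    then have "c \<in> comm_class A p" using D(2) p(2) by (simp add: closed_class_def)
    then have "comm_class A p = comm_class A c"
      by (intro comm_class_eqI) (simp_all add: comm_class_def communicate_iff)
    with p(2) show ?thesis by simp
  qed
  moreover have "comm_class A c \<in> comm_classes A" using c by (simp add: comm_classes_eq)
  ultimately show "single_closed_class A"
    unfolding single_closed_class_def using closed by blast
qed

lemma merge_op_steps:
  assumes "is_nfa A" "merge_op A \<Psi> B" "(nfa_step A)\<^sup>*\<^sup>* q x" "q \<in> states A"
  shows "(nfa_step B)\<^sup>*\<^sup>* (\<Psi> q) (\<Psi> x)"
  using assms(3,4)
proof (induction rule: rtranclp_induct)
  case base
  then show ?case by simp
next
  case (step y z)
  have "y \<in> states A" using steps_in_states[OF assms(1) step(1,4)] .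
  then have "nfa_step B (\<Psi> y) (\<Psi> z)"
    using step(2) assms(2) unfolding nfa_step_def merge_op_def by fast
  with step.IH[OF step(4)] show ?case by (rule rtranclp.rtrancl_into_rtrancl)
qed

theorem lemma6:
  fixes A :: "('q, 'a) nfa" and B :: "('p, 'a) nfa" and \<Psi> :: "'q \<Rightarrow> 'p"
  assumes "is_nfa A" and "is_nfa B"
    and "\<forall>q\<in>states A. reachable A q"
    and "merge_op A \<Psi> B"
    and "single_closed_class A"
  shows "single_closed_class B"
proof -
  obtain c where c: "c \<in> states A" and to_c: "\<forall>q\<in>states A. (nfa_step A)\<^sup>*\<^sup>* q c"
    using assms(5) single_closed_class_iff_common_target[OF assms(1)] by blast
  have onto: "\<Psi> ` states A = states B" using assms(4) by (simp add: merge_op_def)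
  have "\<forall>p\<in>states B. (nfa_step B)\<^sup>*\<^sup>* p (\<Psi> c)"
    using merge_op_steps[OF assms(1,4)] to_c by (auto simp flip: onto)
  moreover have "\<Psi> c \<in> states B" using c onto by blast
  ultimately show ?thesis
    using single_closed_class_iff_common_target[OF assms(2)] by blast
qed

end
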